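(* Let $X$ be an extremally disconnected topological space satisfying $S_1(s\mathcal{O},s\mathcal{O})$ (i.e. $X$ is semi-Rothberger). Then Alice does not have a winning strategy in the game $G_1(s\mathcal{O},s\mathcal{O})$ played on $X$.
   Context: A subset $A$ of a topological space $X$ is semi-open if $A\subseteq \mathrm{Cl}(\mathrm{Int}(A))$; a semi-open cover is a cover by semi-open sets. A space is extremally disconnected if the closure of every open set is open. $X$ satisfies $S_1(s\mathcal{O},s\mathcal{O})$ if for each sequence $\langle\mathcal{U}_n:n\in\omega\rangle$ of semi-open covers of $X$ there are $U_n\in\mathcal{U}_n$ with $\{U_n:n\in\omega\}$ covering $X$. The game $G_1(s\mathcal{O},s\mathcal{O})$ is played by Alice and Bob in innings $n\in\omega$: in inning $n$ Alice chooses a semi-open cover $\mathcal{U}_n$ of $X$ and Bob chooses one element $U_n\in\mathcal{U}_n$; Bob wins if $\{U_n:n\in\omega\}$ covers $X$, otherwise Alice wins. A strategy for Alice assigns to each finite sequence of Bob's previous moves a semi-open cover of $X$; it is winning if Alice wins every play following it. *)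

theory Defs
  imports "HOL-Analysis.Analysis"
begin

definition semi_open_in :: "'a topology \<Rightarrow> 'a set \<Rightarrow> bool" where
  "semi_open_in X A \<longleftrightarrow> A \<subseteq> topspace X \<and> A \<subseteq> X closure_of (X interior_of A)"

definition semi_open_cover :: "'a topology \<Rightarrow> 'a set set \<Rightarrow> bool" where
  "semi_open_cover X \<U> \<longleftrightarrow> (\<forall>U\<in>\<U>. semi_open_in X U) \<and> \<Union>\<U> = topspace X"

definition extremally_disconnected :: "'a topology \<Rightarrow> bool" where
  "extremally_disconnected X \<longleftrightarrow> (\<forall>U. openin X U \<longrightarrow> openin X (X closure_of U))"

definition semi_Rothberger :: "'a topology \<Rightarrow> bool" where
  "semi_Rothberger X \<longleftrightarrow>
     (\<forall>\<U> :: nat \<Rightarrow> 'a set set. (\<forall>n. semi_open_cover X (\<U> n)) \<longrightarrow>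
        (\<exists>U :: nat \<Rightarrow> 'a set. (\<forall>n. U n \<in> \<U> n) \<and> (\<Union>n. U n) = topspace X))"

text \<open>A strategy for Alice maps the finite list of Bob's previous moves
  (in order, innings 0..n-1) to a semi-open cover.\<close>
definition alice_strategy :: "'a topology \<Rightarrow> ('a set list \<Rightarrow> 'a set set) \<Rightarrow> bool" where
  "alice_strategy X \<sigma> \<longleftrightarrow> (\<forall>s. semi_open_cover X (\<sigma> s))"

definition play_follows :: "('a set list \<Rightarrow> 'a set set) \<Rightarrow> (nat \<Rightarrow> 'a set) \<Rightarrow> bool" where
  "play_follows \<sigma> U \<longleftrightarrow> (\<forall>n. U n \<in> \<sigma> (map U [0..<n]))"

definition alice_winning_strategy :: "'a topology \<Rightarrow> ('a set list \<Rightarrow> 'a set set) \<Rightarrow> bool" where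
  "alice_winning_strategy X \<sigma> \<longleftrightarrow> alice_strategy X \<sigma> \<and>
     (\<forall>U. play_follows \<sigma> U \<longrightarrow> (\<Union>n. U n) \<noteq> topspace X)"

end

theory Submission
  imports Defs
begin

text \<open>In an extremally disconnected space the semi-open sets are closed under finite
  intersections, so they form a topology whose open covers are exactly the semi-open covers;
  semi-Rothberger means Rothberger for this topology. It therefore suffices to show
  (Pawlikowski) that Alice has no winning strategy in G1(O, O) on a Rothberger space.
  Enumerating each cover Alice can play, Bob's plays become paths through the tree of finite
  sequences of indices. Selections covering every point infinitely often yield a bound \<open>b\<close> such that every
  point is caught by one of the first \<open>b m\<close> moves at every \<open>b\<close>-bounded node of level \<open>m\<close>, for
  infinitely many levels \<open>m\<close>. One more selection, from covers by intersections over \<open>2\<^sup>k\<close> such levels,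
  yields one path along which every point is covered.\<close>

lemma semi_open_in_Union:
  assumes "\<And>A. A \<in> \<A> \<Longrightarrow> semi_open_in X A"
  shows "semi_open_in X (\<Union>\<A>)"
  unfolding semi_open_in_def
proof
  show "\<Union>\<A> \<subseteq> topspace X" using assms by (auto simp: semi_open_in_def)
  show "\<Union>\<A> \<subseteq> X closure_of X interior_of \<Union>\<A>"
  proof
    fix x assume "x \<in> \<Union>\<A>"
    then obtain A where A: "A \<in> \<A>" "x \<in> A" by blast
    then have "x \<in> X closure_of X interior_of A" using assms by (auto simp: semi_open_in_def)
    moreover have "X closure_of X interior_of A \<subseteq> X closure_of X interior_of \<Union>\<A>"
      by (intro closure_of_mono interior_of_mono) (use A in blast)
    ultimately show "x \<in> X closure_of X interior_of \<Union>\<A>" by blast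
  qed
qed

lemma semi_open_in_Int:
  assumes ed: "extremally_disconnected X" and A: "semi_open_in X A" and B: "semi_open_in X B"
  shows "semi_open_in X (A \<inter> B)"
proof -
  let ?P = "X interior_of A" and ?Q = "X interior_of B"
  have "openin X (X closure_of ?P)" using ed by (simp add: extremally_disconnected_def)
  then have "X closure_of ?P \<inter> X closure_of ?Q \<subseteq> X closure_of (X closure_of ?P \<inter> ?Q)"
    by (rule openin_Int_closure_of_subset)
  also have "\<dots> \<subseteq> X closure_of (X closure_of (?Q \<inter> ?P))"
    using openin_Int_closure_of_subset[of X ?Q ?P]
    by (intro closure_of_mono) (simp add: Int_commute)
  also have "\<dots> = X closure_of (X interior_of (A \<inter> B))"
    by (simp add: interior_of_Int Int_commute)
  finally show ?thesis using A B by (auto simp: semi_open_in_def)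
qed

definition semi_open_topology :: "'a topology \<Rightarrow> 'a topology" where
  "semi_open_topology X = topology (semi_open_in X)"

lemma openin_semi_open_topology:
  assumes "extremally_disconnected X"
  shows "openin (semi_open_topology X) = semi_open_in X"
  unfolding semi_open_topology_def
  by (rule topology_inverse') (auto simp: istopology_def intro: semi_open_in_Int[OF assms] semi_open_in_Union)

lemma topspace_semi_open_topology:
  assumes "extremally_disconnected X"
  shows "topspace (semi_open_topology X) = topspace X"
proof -
  have "semi_open_in X (topspace X)"
    by (simp add: semi_open_in_def closure_of_topspace interior_of_openin)
  then show ?thesis
    by (auto simp: topspace_def openin_semi_open_topology[OF assms] semi_open_in_def)
qed

definition open_cover_of :: "'a topology \<Rightarrow> 'a set set \<Rightarrow> bool" where
  "open_cover_of T \<U> \<longleftrightarrow> (\<forall>U\<in>\<U>. openin T U) \<and> \<Union>\<U> = topspace T"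

lemma semi_open_cover_iff_open_cover_of:
  assumes "extremally_disconnected X"
  shows "semi_open_cover X \<U> \<longleftrightarrow> open_cover_of (semi_open_topology X) \<U>"
  by (simp add: semi_open_cover_def open_cover_of_def openin_semi_open_topology[OF assms]
      topspace_semi_open_topology[OF assms])

definition rothberger_space :: "'a topology \<Rightarrow> bool" where
  "rothberger_space T \<longleftrightarrow>
     (\<forall>\<U> :: nat \<Rightarrow> 'a set set. (\<forall>n. open_cover_of T (\<U> n)) \<longrightarrow>
        (\<exists>U. (\<forall>n. U n \<in> \<U> n) \<and> (\<Union>n. U n) = topspace T))"

lemma rothberger_space_semi_open_topology:
  assumes "extremally_disconnected X" "semi_Rothberger X"
  shows "rothberger_space (semi_open_topology X)"
  using assms(2)
  by (simp add: rothberger_space_def semi_Rothberger_def semi_open_cover_iff_open_cover_of[OF assms(1)]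
      topspace_semi_open_topology[OF assms(1)])

lemma rothberger_spaceD:
  fixes \<U> :: "nat \<Rightarrow> 'a set set"
  assumes "rothberger_space T" "\<And>n. open_cover_of T (\<U> n)"
  shows "\<exists>U. (\<forall>n. U n \<in> \<U> n) \<and> (\<Union>n. U n) = topspace T"
  using spec[OF assms(1)[unfolded rothberger_space_def], of \<U>] assms(2) by simp

lemma rothberger_countable_subcover:
  assumes "rothberger_space T" "open_cover_of T \<U>"
  shows "\<exists>U :: nat \<Rightarrow> 'a set. range U \<subseteq> \<U> \<and> (\<Union>n. U n) = topspace T"
  using rothberger_spaceD[of T "\<lambda>_. \<U>"] assms by (simp add: image_subset_iff)

lemma rothberger_selection_infinitely_often:
  fixes \<U> :: "nat \<Rightarrow> 'a set set"
  assumes "rothberger_space T" "\<And>n. open_cover_of T (\<U> n)"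
  shows "\<exists>U. (\<forall>n. U n \<in> \<U> n) \<and> (\<forall>x\<in>topspace T. infinite {n. x \<in> U n})"
proof -
  have "\<forall>K. \<exists>V. (\<forall>n. V n \<in> \<U> (prod_encode (K, n))) \<and> (\<Union>n. V n) = topspace T"
    by (intro allI rothberger_spaceD[OF assms(1)] assms(2))
  then obtain V where V: "\<forall>K. (\<forall>n. V K n \<in> \<U> (prod_encode (K, n))) \<and> (\<Union>n. V K n) = topspace T"
    by (rule choice[THEN exE])
  define U where "U m = case_prod V (prod_decode m)" for m
  have U_encode: "U (prod_encode (K, n)) = V K n" for K n
    by (simp add: U_def)
  have "U m \<in> \<U> m" for m
  proof -
    obtain K n where "m = prod_encode (K, n)"
      by (metis prod_decode_inverse prod.collapse)
    then show ?thesis using V by (simp add: U_encode)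
  qed
  moreover have "infinite {n. x \<in> U n}" if "x \<in> topspace T" for x
  proof -
    have "\<forall>K. \<exists>n. x \<in> V K n"
      using V \<open>x \<in> topspace T\<close> by blast
    then obtain n where n: "\<forall>K. x \<in> V K (n K)"
      by (rule choice[THEN exE])
    have "inj (\<lambda>K. prod_encode (K, n K))"
      by (rule injI) simp
    then have "infinite (range (\<lambda>K. prod_encode (K, n K)))"
      by (rule range_inj_infinite)
    moreover have "range (\<lambda>K. prod_encode (K, n K)) \<subseteq> {n. x \<in> U n}"
      using n by (auto simp: U_encode)
    ultimately show ?thesis
      by (rule infinite_super[rotated])
  qed
  ultimately show ?thesis by blast
qed

lemma sum_power2_lessThan_less: "(\<Sum>j<k. (2::nat) ^ j) < 2 ^ k"
  by (induction k) auto

lemma first_occurrence_in_doubling_family: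
  fixes D :: "nat \<Rightarrow> 'b set"
  assumes fin: "\<And>k. finite (D k)" and card: "\<And>k. card (D k) = 2 ^ k"
  shows "\<exists>m\<in>D k. (LEAST j. m \<in> D j) = k"
proof (rule ccontr)
  assume no_new: "\<not> (\<exists>m\<in>D k. (LEAST j. m \<in> D j) = k)"
  have "D k \<subseteq> (\<Union>j<k. D j)"
  proof
    fix m assume m: "m \<in> D k"
    then have "(LEAST j. m \<in> D j) \<le> k"
      by (rule Least_le)
    then have "(LEAST j. m \<in> D j) < k"
      using no_new m by (simp add: order.order_iff_strict)
    moreover have "m \<in> D (LEAST j. m \<in> D j)"
      using m by (rule LeastI)
    ultimately show "m \<in> (\<Union>j<k. D j)" by blast
  qed
  then have "card (D k) \<le> card (\<Union>j<k. D j)"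
    by (rule card_mono[rotated]) (simp add: fin)
  also have "\<dots> \<le> (\<Sum>j<k. card (D j))"
    by (rule card_UN_le) simp
  also have "\<dots> = (\<Sum>j<k. 2 ^ j)"
    by (simp add: card)
  also have "\<dots> < 2 ^ k"
    by (rule sum_power2_lessThan_less)
  finally show False
    by (simp add: card)
qed

primrec bound_seq :: "(nat \<Rightarrow> nat) \<Rightarrow> nat \<Rightarrow> nat" where
  "bound_seq M 0 = 1"
| "bound_seq M (Suc n) = max (bound_seq M n + 1) (Max (M ` {..bound_seq M n}))"

lemma strict_mono_bound_seq: "strict_mono (bound_seq M)"
  by (rule strict_monoI_Suc) simp

lemma less_bound_seq: "n < bound_seq M n"
  by (induction n) auto

lemma le_bound_seq_Suc:
  assumes "k \<le> bound_seq M n"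
  shows "M k \<le> bound_seq M (Suc n)"
proof -
  have "M k \<le> Max (M ` {..bound_seq M n})"
    using assms by (intro Max_ge) auto
  then show ?thesis by simp
qed

lemma bound_seq_interval:
  assumes "bound_seq M 0 \<le> k"
  shows "\<exists>n. bound_seq M n \<le> k \<and> k < bound_seq M (Suc n)"
proof -
  have "k < bound_seq M (Suc k)"
    using less_bound_seq[of "Suc k" M] by (rule less_trans[OF lessI])
  moreover have "\<not> k < bound_seq M 0"
    using assms by (simp only: not_less)
  ultimately obtain n where "\<forall>i\<le>n. \<not> k < bound_seq M i" "k < bound_seq M (Suc n)"
    using ex_least_nat_less[of "\<lambda>n. k < bound_seq M n" "Suc k"] by blast
  then show ?thesis
    by (intro exI[of _ n]) (simp add: not_less del: bound_seq.simps)
qed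

lemma infinite_bound_seq_steps:
  assumes h: "mono h" and often: "\<And>K. \<exists>k\<ge>K. h (h k) \<le> M k"
  shows "infinite {n. h (bound_seq M n) \<le> bound_seq M (Suc n)}"
  unfolding infinite_nat_iff_unbounded_le
proof
  fix N
  let ?b = "bound_seq M"
  obtain k where k: "?b N \<le> k" "h (h k) \<le> M k"
    using often by blast
  have "?b 0 \<le> ?b N"
    by (simp add: strict_mono_less_eq[OF strict_mono_bound_seq] del: bound_seq.simps)
  then obtain n where n: "?b n \<le> k" "k < ?b (Suc n)"
    using bound_seq_interval[OF order_trans[OF _ k(1)]] by blast
  have "?b N < ?b (Suc n)"
    using k(1) n(2) by (rule le_less_trans)
  then have "N \<le> n"
    using strict_mono_less[OF strict_mono_bound_seq] by (simp del: bound_seq.simps)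
  show "\<exists>n'\<ge>N. n' \<in> {n. h (?b n) \<le> ?b (Suc n)}"
  proof (cases "h (?b n) \<le> ?b (Suc n)")
    case True
    then show ?thesis using \<open>N \<le> n\<close> by blast
  next
    case False
    \<comment> \<open>then \<open>?b (Suc n)\<close> lies below \<open>h k\<close>, so the next level is controlled by \<open>h (h k) \<le> M k\<close>\<close>
    then have "?b (Suc n) < h (?b n)"
      by (simp only: not_le)
    also have "\<dots> \<le> h k"
      using h n(1) by (rule monoD)
    finally have "h (?b (Suc n)) \<le> h (h k)"
      using h by (simp add: monoD del: bound_seq.simps)
    also have "\<dots> \<le> M k"
      by (fact k(2))
    also have "\<dots> \<le> ?b (Suc (Suc n))"
      using n(2) by (intro le_bound_seq_Suc) simp
    finally show ?thesis
      using \<open>N \<le> n\<close> by (intro exI[of _ "Suc n"]) auto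
  qed
qed

definition bounded_lists :: "(nat \<Rightarrow> nat) \<Rightarrow> nat \<Rightarrow> nat list set" where
  "bounded_lists b m = {t. length t = m \<and> (\<forall>i<m. t ! i \<le> b i)}"

lemma finite_bounded_lists: "finite (bounded_lists b m)"
proof -
  have "bounded_lists b m \<subseteq> {t. set t \<subseteq> {..(\<Sum>i<m. b i)} \<and> length t \<le> m}"
  proof
    fix t assume t: "t \<in> bounded_lists b m"
    have "y \<le> (\<Sum>i<m. b i)" if "y \<in> set t" for y
    proof -
      obtain i where i: "i < m" "y = t ! i"
        using t \<open>y \<in> set t\<close> by (auto simp: in_set_conv_nth bounded_lists_def)
      then have "y \<le> b i" using t by (simp add: bounded_lists_def)
      also have "b i \<le> (\<Sum>i<m. b i)" using i by (intro member_le_sum) auto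
      finally show ?thesis .
    qed
    with t show "t \<in> {t. set t \<subseteq> {..(\<Sum>i<m. b i)} \<and> length t \<le> m}"
      by (auto simp: bounded_lists_def)
  qed
  then show ?thesis
    by (rule finite_subset) (rule finite_lists_length_le, simp)
qed

lemma ex_bounded_path_of_choice:
  fixes \<phi> :: "nat \<Rightarrow> nat list \<Rightarrow> nat"
  assumes "\<And>n t. t \<in> bounded_lists b n \<Longrightarrow> \<phi> n t \<le> b n"
  shows "\<exists>f. \<forall>n. map f [0..<n] \<in> bounded_lists b n \<and> f n = \<phi> n (map f [0..<n])"
proof -
  define walk where "walk = rec_nat [] (\<lambda>n t. t @ [\<phi> n t])"
  have walk_Suc: "walk (Suc n) = walk n @ [\<phi> n (walk n)]" for n
    by (simp add: walk_def)
  define f where "f n = \<phi> n (walk n)" for n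
  have map_f: "map f [0..<n] = walk n" for n
    by (induction n) (simp_all add: walk_def f_def)
  have "walk n \<in> bounded_lists b n" for n
  proof (induction n)
    case 0
    then show ?case by (simp add: walk_def bounded_lists_def)
  next
    case (Suc n)
    then have "\<phi> n (walk n) \<le> b n" by (rule assms)
    with Suc show ?case
      by (auto simp: walk_Suc bounded_lists_def nth_append less_Suc_eq)
  qed
  then show ?thesis
    by (intro exI[of _ f]) (simp add: map_f f_def)
qed

definition lists_below :: "nat \<Rightarrow> nat list set" where
  "lists_below B = {t. set t \<subseteq> {..B} \<and> length t \<le> B}"

lemma finite_lists_below: "finite (lists_below B)"
  unfolding lists_below_def by (rule finite_lists_length_le) simp

lemma lists_below_mono: "B \<le> B' \<Longrightarrow> lists_below B \<subseteq> lists_below B'"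
  unfolding lists_below_def by auto

lemma bounded_lists_Suc_subset_lists_below:
  assumes "mono b" "n < b n"
  shows "bounded_lists b (Suc n) \<subseteq> lists_below (b n)"
proof
  fix t assume t: "t \<in> bounded_lists b (Suc n)"
  have "t ! i \<le> b n" if "i < Suc n" for i
    using t that monoD[OF assms(1), of i n] by (auto simp: bounded_lists_def)
  then show "t \<in> lists_below (b n)"
    using t assms(2) by (auto simp: lists_below_def bounded_lists_def in_set_conv_nth)
qed

locale rothberger_game =
  fixes T :: "'a topology" and \<sigma> :: "'a set list \<Rightarrow> 'a set set"
  assumes rothberger: "rothberger_space T"
    and open_cover_strategy: "\<And>s. open_cover_of T (\<sigma> s)"
begin

definition enum :: "'a set list \<Rightarrow> nat \<Rightarrow> 'a set" where
  "enum p = (SOME U. range U \<subseteq> \<sigma> p \<and> (\<Union>n. U n) = topspace T)"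

lemma enum: "enum p n \<in> \<sigma> p" "(\<Union>n. enum p n) = topspace T"
  using someI_ex[OF rothberger_countable_subcover[OF rothberger open_cover_strategy]]
  unfolding enum_def by blast+

lemma openin_enum: "openin T (enum p n)"
  using enum(1) open_cover_strategy by (auto simp: open_cover_of_def)

text \<open>Bob's play is coded by the indices he picks in the enumerations of Alice's covers.\<close>

definition position :: "nat list \<Rightarrow> 'a set list" where
  "position = foldl (\<lambda>p k. p @ [enum p k]) []"

lemma position_snoc: "position (t @ [k]) = position t @ [enum (position t) k]"
  by (simp add: position_def)

definition move :: "nat list \<Rightarrow> nat \<Rightarrow> 'a set" where
  "move t = enum (position t)"

definition least_move :: "'a \<Rightarrow> nat list \<Rightarrow> nat" where
  "least_move x t = (LEAST k. x \<in> move t k)"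

lemma in_move_least_move: "x \<in> topspace T \<Longrightarrow> x \<in> move t (least_move x t)"
  unfolding least_move_def move_def
  by (rule LeastI_ex) (use enum(2)[of "position t"] in blast)

lemma least_move_le: "x \<in> move t k \<Longrightarrow> least_move x t \<le> k"
  unfolding least_move_def by (rule Least_le)

lemma least_move_le_iff:
  assumes "x \<in> topspace T"
  shows "least_move x t \<le> M \<longleftrightarrow> (\<exists>j\<le>M. x \<in> move t j)"
proof
  assume "least_move x t \<le> M"
  then show "\<exists>j\<le>M. x \<in> move t j"
    using in_move_least_move[OF assms] by blast
next
  assume "\<exists>j\<le>M. x \<in> move t j"
  then obtain j where "j \<le> M" "x \<in> move t j" by blast
  then show "least_move x t \<le> M"
    using least_move_le[of x t j] by linarith
qed

definition play :: "(nat \<Rightarrow> nat) \<Rightarrow> nat \<Rightarrow> 'a set" where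
  "play f n = move (map f [0..<n]) (f n)"

lemma map_play: "map (play f) [0..<n] = position (map f [0..<n])"
proof (induction n)
  case 0
  then show ?case by (simp add: position_def)
next
  case (Suc n)
  then show ?case by (simp add: play_def move_def position_snoc)
qed

lemma play_follows_play: "play_follows \<sigma> (play f)"
  unfolding play_follows_def map_play by (simp add: play_def move_def enum(1))

definition covered_within :: "(nat \<Rightarrow> nat) \<Rightarrow> 'a \<Rightarrow> nat \<Rightarrow> bool" where
  "covered_within b x m \<longleftrightarrow> (\<forall>t\<in>bounded_lists b m. least_move x t \<le> b m)"

definition level_meet :: "(nat \<Rightarrow> nat) \<Rightarrow> nat \<Rightarrow> (nat list \<Rightarrow> nat) \<Rightarrow> 'a set" where
  "level_meet b m \<phi> = (\<Inter>t\<in>bounded_lists b m. move t (\<phi> t)) \<inter> topspace T"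

lemma openin_level_meet: "openin T (level_meet b m \<phi>)"
  unfolding level_meet_def move_def by (intro openin_INT finite_bounded_lists openin_enum)

text \<open>The \<open>2\<^sup>k\<close> levels leave every \<open>k\<close> a level not claimed by any earlier \<open>k\<close>.\<close>

definition meet_cover :: "(nat \<Rightarrow> nat) \<Rightarrow> nat \<Rightarrow> 'a set set" where
  "meet_cover b k = {(\<Inter>m\<in>D. level_meet b m (\<psi> m)) \<inter> topspace T | D \<psi>.
     finite D \<and> card D = 2 ^ k \<and> (\<forall>m\<in>D. \<forall>t\<in>bounded_lists b m. \<psi> m t \<le> b m)}"

lemma open_cover_meet_cover:
  assumes "\<And>x. x \<in> topspace T \<Longrightarrow> infinite {m. covered_within b x m}"
  shows "open_cover_of T (meet_cover b k)"
  unfolding open_cover_of_def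
proof
  show "\<forall>U\<in>meet_cover b k. openin T U"
    unfolding meet_cover_def by (auto intro!: openin_INT openin_level_meet)
  show "\<Union>(meet_cover b k) = topspace T"
  proof
    show "\<Union>(meet_cover b k) \<subseteq> topspace T"
      unfolding meet_cover_def by auto
    show "topspace T \<subseteq> \<Union>(meet_cover b k)"
    proof
      fix x assume x: "x \<in> topspace T"
      obtain D where D: "finite D" "card D = 2 ^ k" "D \<subseteq> {m. covered_within b x m}"
        using infinite_arbitrarily_large[OF assms[OF x]] by blast
      have "(\<Inter>m\<in>D. level_meet b m (least_move x)) \<inter> topspace T \<in> meet_cover b k"
        unfolding meet_cover_def mem_Collect_eq
        by (rule exI[of _ D], rule exI[of _ "\<lambda>_. least_move x"])
          (use D in \<open>auto simp: covered_within_def\<close>)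
      moreover have "x \<in> (\<Inter>m\<in>D. level_meet b m (least_move x)) \<inter> topspace T"
        using x in_move_least_move by (auto simp: level_meet_def)
      ultimately show "x \<in> \<Union>(meet_cover b k)" by blast
    qed
  qed
qed

lemma covering_play_from_bound:
  assumes "\<And>x. x \<in> topspace T \<Longrightarrow> infinite {m. covered_within b x m}"
  shows "\<exists>f. \<forall>x\<in>topspace T. \<exists>n. x \<in> play f n"
proof -
  have "\<exists>W. (\<forall>k. W k \<in> meet_cover b k) \<and> (\<Union>k. W k) = topspace T"
    using open_cover_meet_cover[OF assms] by (rule rothberger_spaceD[OF rothberger])
  then obtain W where W_in: "\<And>k. W k \<in> meet_cover b k" and W_cover: "(\<Union>k. W k) = topspace T"
    by blast
  have "\<forall>k. \<exists>D \<psi>. W k = (\<Inter>m\<in>D. level_meet b m (\<psi> m)) \<inter> topspace T \<and>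
          finite D \<and> card D = 2 ^ k \<and> (\<forall>m\<in>D. \<forall>t\<in>bounded_lists b m. \<psi> m t \<le> b m)"
    using W_in unfolding meet_cover_def by blast
  then obtain D \<psi> where D\<psi>: "\<forall>k. W k = (\<Inter>m\<in>D k. level_meet b m (\<psi> k m)) \<inter> topspace T \<and>
      finite (D k) \<and> card (D k) = 2 ^ k \<and> (\<forall>m\<in>D k. \<forall>t\<in>bounded_lists b m. \<psi> k m t \<le> b m)"
    by metis
  then have W: "\<And>k. W k = (\<Inter>m\<in>D k. level_meet b m (\<psi> k m)) \<inter> topspace T"
    and D: "\<And>k. finite (D k)" "\<And>k. card (D k) = 2 ^ k"
    and \<psi>: "\<And>k m t. m \<in> D k \<Longrightarrow> t \<in> bounded_lists b m \<Longrightarrow> \<psi> k m t \<le> b m"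
    by blast+
  define owner where "owner m = (LEAST k. m \<in> D k)" for m
  define \<phi> where "\<phi> m = (if \<exists>k. m \<in> D k then \<psi> (owner m) m else (\<lambda>_. 0))" for m
  have \<phi>_le: "\<phi> n t \<le> b n" if "t \<in> bounded_lists b n" for n t
  proof (cases "\<exists>k. n \<in> D k")
    case True
    then have "n \<in> D (owner n)"
      unfolding owner_def by (rule LeastI_ex)
    then show ?thesis
      using \<psi> that True by (simp add: \<phi>_def)
  qed (simp add: \<phi>_def)
  obtain f where f_bounded: "\<And>n. map f [0..<n] \<in> bounded_lists b n"
    and f_eq: "\<And>n. f n = \<phi> n (map f [0..<n])"
    using ex_bounded_path_of_choice[where b = b and \<phi> = \<phi>, OF \<phi>_le] by blast
  have "\<exists>n. x \<in> play f n" if x: "x \<in> topspace T" for x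
  proof -
    obtain k where "x \<in> W k"
      using W_cover x by blast
    obtain m where m: "m \<in> D k" "owner m = k"
      using first_occurrence_in_doubling_family[OF D] unfolding owner_def by blast
    then have "x \<in> level_meet b m (\<psi> k m)"
      using \<open>x \<in> W k\<close> by (simp add: W)
    then have "x \<in> move (map f [0..<m]) (\<psi> k m (map f [0..<m]))"
      using f_bounded[of m] by (auto simp: level_meet_def)
    moreover note f_eq[of m]
    moreover have "\<phi> m = \<psi> k m"
      using m by (auto simp: \<phi>_def)
    ultimately have "x \<in> play f m"
      by (simp add: play_def)
    then show ?thesis ..
  qed
  then show ?thesis by blast
qed

definition move_bound :: "'a \<Rightarrow> nat \<Rightarrow> nat" where
  "move_bound x B = Max (insert B (least_move x ` lists_below B))"

lemma move_bound_le_iff: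
  "move_bound x B \<le> M \<longleftrightarrow> B \<le> M \<and> (\<forall>t\<in>lists_below B. least_move x t \<le> M)"
  unfolding move_bound_def by (simp add: finite_lists_below)

lemma le_move_bound: "B \<le> move_bound x B"
  using move_bound_le_iff by blast

lemma least_move_le_move_bound: "t \<in> lists_below B \<Longrightarrow> least_move x t \<le> move_bound x B"
  using move_bound_le_iff by blast

lemma mono_move_bound: "mono (move_bound x)"
proof
  fix B B' :: nat assume "B \<le> B'"
  then have "B \<le> move_bound x B'"
    using le_move_bound[of B' x] by (rule order_trans)
  moreover have "least_move x t \<le> move_bound x B'" if "t \<in> lists_below B" for t
    using lists_below_mono[OF \<open>B \<le> B'\<close>] that by (intro least_move_le_move_bound) blast
  ultimately show "move_bound x B \<le> move_bound x B'"
    by (simp add: move_bound_le_iff)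
qed

lemma openin_move_bound_le: "openin T {x \<in> topspace T. move_bound x B \<le> M}"
proof (cases "B \<le> M")
  case True
  then have "move_bound x B \<le> M \<longleftrightarrow> (\<forall>t\<in>lists_below B. \<exists>j\<in>{..M}. x \<in> move t j)"
    if "x \<in> topspace T" for x
    using that by (simp add: move_bound_le_iff least_move_le_iff Bex_def)
  then have "{x \<in> topspace T. move_bound x B \<le> M} =
      (\<Inter>t\<in>lists_below B. \<Union>j\<le>M. move t j) \<inter> topspace T"
    by blast
  then show ?thesis
    by (auto intro!: openin_INT openin_Union simp: finite_lists_below move_def openin_enum)
next
  case False
  have "M < move_bound x B" for x
    using False le_move_bound[of B x] by linarith
  then show ?thesis
    by (simp add: not_le[symmetric])
qed

lemma openin_move_bound_twice_le:
  "openin T {x \<in> topspace T. move_bound x (move_bound x k) \<le> M}"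
proof -
  have "{x \<in> topspace T. move_bound x (move_bound x k) \<le> M} =
      (\<Union>c. {x \<in> topspace T. move_bound x k \<le> c} \<inter> {x \<in> topspace T. move_bound x c \<le> M})"
    using monoD[OF mono_move_bound] by (auto intro: order_trans)
  then show ?thesis
    by (auto intro!: openin_Union openin_Int openin_move_bound_le)
qed

lemma covered_within_Suc:
  assumes "mono b" "n < b n" "move_bound x (b n) \<le> b (Suc n)"
  shows "covered_within b x (Suc n)"
  unfolding covered_within_def
proof
  fix t assume "t \<in> bounded_lists b (Suc n)"
  then have "t \<in> lists_below (b n)"
    using bounded_lists_Suc_subset_lists_below[OF assms(1,2)] by blast
  then have "least_move x t \<le> move_bound x (b n)"
    by (rule least_move_le_move_bound)
  then show "least_move x t \<le> b (Suc n)"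
    using assms(3) by (rule order_trans)
qed

lemma exists_bound_covered_infinitely_often:
  "\<exists>b. \<forall>x\<in>topspace T. infinite {m. covered_within b x m}"
proof -
  define G where "G k M = {x \<in> topspace T. move_bound x (move_bound x k) \<le> M}" for k M
  have G_cover: "open_cover_of T (range (G k))" for k
  proof -
    have "x \<in> G k (move_bound x (move_bound x k))" if "x \<in> topspace T" for x
      using that by (simp add: G_def)
    then have "topspace T \<subseteq> \<Union>(range (G k))"
      by blast
    moreover have "\<Union>(range (G k)) \<subseteq> topspace T"
      by (auto simp: G_def)
    ultimately show ?thesis
      by (auto simp: open_cover_of_def G_def openin_move_bound_twice_le)
  qed
  obtain U where U: "(\<forall>k. U k \<in> range (G k)) \<and> (\<forall>x\<in>topspace T. infinite {k. x \<in> U k})"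
    using rothberger_selection_infinitely_often[OF rothberger G_cover] by (rule exE)
  have "\<forall>k. \<exists>m. U k = G k m"
  proof
    fix k
    have "U k \<in> range (G k)"
      using U by simp
    then show "\<exists>m. U k = G k m"
      by (rule rangeE) (rule exI)
  qed
  then obtain M where U_eq: "\<forall>k. U k = G k (M k)"
    by (rule choice[THEN exE])
  have U_often: "\<forall>x\<in>topspace T. infinite {k. x \<in> U k}"
    using U by (rule conjunct2)
  have "infinite {m. covered_within (bound_seq M) x m}" if x: "x \<in> topspace T" for x
  proof -
    have "\<exists>k\<ge>K. move_bound x (move_bound x k) \<le> M k" for K
    proof -
      obtain k where "K \<le> k" "x \<in> U k"
        using U_often x unfolding infinite_nat_iff_unbounded_le by blast
      then show ?thesis
        using U_eq by (auto simp: G_def)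
    qed
    then have "infinite {n. move_bound x (bound_seq M n) \<le> bound_seq M (Suc n)}"
      (is "infinite ?S") by (rule infinite_bound_seq_steps[OF mono_move_bound])
    then have "infinite (Suc ` ?S)"
      by (simp add: finite_image_iff del: bound_seq.simps)
    moreover have "Suc ` ?S \<subseteq> {m. covered_within (bound_seq M) x m}"
      using covered_within_Suc[OF strict_mono_mono[OF strict_mono_bound_seq] less_bound_seq]
      by blast
    ultimately show ?thesis
      by (rule infinite_super[rotated])
  qed
  then show ?thesis by blast
qed

theorem exists_covering_play: "\<exists>U. play_follows \<sigma> U \<and> (\<Union>n. U n) = topspace T"
proof -
  obtain b where "\<forall>x\<in>topspace T. infinite {m. covered_within b x m}"
    using exists_bound_covered_infinitely_often by blast
  then obtain f where f: "\<forall>x\<in>topspace T. \<exists>n. x \<in> play f n"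
    using covering_play_from_bound[of b] by blast
  have "play f n \<subseteq> topspace T" for n
    by (simp add: play_def move_def openin_subset openin_enum)
  with f have "(\<Union>n. play f n) = topspace T" by blast
  with play_follows_play show ?thesis by blast
qed

end

theorem mainTheorem4:
  fixes X :: "'a topology"
  assumes "extremally_disconnected X"
    and "semi_Rothberger X"
  shows "\<not> (\<exists>\<sigma>. alice_winning_strategy X \<sigma>)"
proof
  assume "\<exists>\<sigma>. alice_winning_strategy X \<sigma>"
  then obtain \<sigma> where strategy: "alice_strategy X \<sigma>"
    and wins: "\<And>U. play_follows \<sigma> U \<Longrightarrow> (\<Union>n. U n) \<noteq> topspace X"
    unfolding alice_winning_strategy_def by blast
  interpret rothberger_game "semi_open_topology X" \<sigma>
  proof
    show "rothberger_space (semi_open_topology X)"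
      using assms by (rule rothberger_space_semi_open_topology)
    show "open_cover_of (semi_open_topology X) (\<sigma> s)" for s
      using strategy semi_open_cover_iff_open_cover_of[OF assms(1)]
      by (simp add: alice_strategy_def)
  qed
  obtain U where "play_follows \<sigma> U" "(\<Union>n. U n) = topspace X"
    using exists_covering_play by (auto simp: topspace_semi_open_topology[OF assms(1)])
  with wins show False by blast
qed

end
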